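(* If $p:X\to Y$ is a covering map with finite fibers and $X$ is paracompact (Hausdorff), then $p$ is an overlay.
   Context: A covering map $p:X\to Y$ is a continuous surjection such that every point of $Y$ has an open neighborhood $V$ with $p^{-1}(V)$ a disjoint union of open sets each mapped homeomorphically onto $V$. For a continuous map $p:X\to Y$: a slice of $p$ is an open set $U\subseteq X$ such that $p^{-1}(p(U))$ is the disjoint union of a family of open sets $U_s$ ($s\in S$), each mapped by $p$ homeomorphically onto $p(U)$, with $U=U_t$ for some $t\in S$. A covering structure of $p$ is an open cover $\mathcal S$ of $X$ by slices of $p$ such that for every $U\in\mathcal S$, $p^{-1}(p(U))$ is the disjoint union of a family $\{U_j\}_{j\in J}$ of elements of $\mathcal S$, each mapped homeomorphically onto $p(U)$. For a cover $\mathcal S$ and $x\in X$, $st(x,\mathcal S)=\bigcup\{U\in\mathcal S: x\in U\}$. An overlay structure of $p$ is a covering structure $\mathcal S$ such that $st(x,\mathcal S)$ is a slice of $p$ for every $x\in X$. The map $p$ is an overlay if it has an overlay structure. *)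

theory Defs
  imports "HOL-Analysis.Analysis"
begin

definition covering_map :: "'a topology \<Rightarrow> 'b topology \<Rightarrow> ('a \<Rightarrow> 'b) \<Rightarrow> bool" where
  "covering_map X Y p \<longleftrightarrow>
     continuous_map X Y p \<and> p ` topspace X = topspace Y \<and>
     (\<forall>y \<in> topspace Y. \<exists>V. openin Y V \<and> y \<in> V \<and>
        (\<exists>\<U>. \<Union>\<U> = {x \<in> topspace X. p x \<in> V} \<and> pairwise disjnt \<U> \<and>
             (\<forall>U \<in> \<U>. openin X U \<and> homeomorphic_map (subtopology X U) (subtopology Y V) p)))"

definition slice :: "'a topology \<Rightarrow> 'b topology \<Rightarrow> ('a \<Rightarrow> 'b) \<Rightarrow> 'a set \<Rightarrow> bool" where
  "slice X Y p U \<longleftrightarrow>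
     openin X U \<and>
     (\<exists>\<U>. U \<in> \<U> \<and> \<Union>\<U> = {x \<in> topspace X. p x \<in> p ` U} \<and> pairwise disjnt \<U> \<and>
          (\<forall>W \<in> \<U>. openin X W \<and> homeomorphic_map (subtopology X W) (subtopology Y (p ` U)) p))"

definition covering_structure :: "'a topology \<Rightarrow> 'b topology \<Rightarrow> ('a \<Rightarrow> 'b) \<Rightarrow> 'a set set \<Rightarrow> bool" where
  "covering_structure X Y p \<S> \<longleftrightarrow>
     \<Union>\<S> = topspace X \<and> (\<forall>U \<in> \<S>. slice X Y p U) \<and>
     (\<forall>U \<in> \<S>. \<exists>\<U>. \<U> \<subseteq> \<S> \<and> \<Union>\<U> = {x \<in> topspace X. p x \<in> p ` U} \<and> pairwise disjnt \<U> \<and>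
          (\<forall>W \<in> \<U>. homeomorphic_map (subtopology X W) (subtopology Y (p ` U)) p))"

definition star :: "'a \<Rightarrow> 'a set set \<Rightarrow> 'a set" where
  "star x \<S> = \<Union>{U \<in> \<S>. x \<in> U}"

definition overlay_structure :: "'a topology \<Rightarrow> 'b topology \<Rightarrow> ('a \<Rightarrow> 'b) \<Rightarrow> 'a set set \<Rightarrow> bool" where
  "overlay_structure X Y p \<S> \<longleftrightarrow>
     covering_structure X Y p \<S> \<and> (\<forall>x \<in> topspace X. slice X Y p (star x \<S>))"

definition overlay :: "'a topology \<Rightarrow> 'b topology \<Rightarrow> ('a \<Rightarrow> 'b) \<Rightarrow> bool" where
  "overlay X Y p \<longleftrightarrow> (\<exists>\<S>. overlay_structure X Y p \<S>)"

definition paracompact_space :: "'a topology \<Rightarrow> bool" where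
  "paracompact_space X \<longleftrightarrow>
     Hausdorff_space X \<and>
     (\<forall>\<C>. (\<forall>C \<in> \<C>. openin X C) \<and> \<Union>\<C> = topspace X \<longrightarrow>
        (\<exists>\<D>. (\<forall>D \<in> \<D>. openin X D) \<and> \<Union>\<D> = topspace X \<and>
             (\<forall>D \<in> \<D>. \<exists>C \<in> \<C>. D \<subseteq> C) \<and> locally_finite_in X \<D>))"

end

theory Submission
  imports Defs
begin

text \<open>
  Paracompactness (via regularity and a locally finite refinement by sets whose closures lie
  in sheets) gives open sets G x \<ni> x such that, for every z, all the G x containing z lie in a
  single sheet of the covering. For y in Y let N y be the intersection of an evenly covered neighbourhood of y
  with the images p(G x), x in the fibre over y; since the fibre is finite, N y is open.
  The cells G x \<inter> p\<inverse>(N (p x)) form an overlay structure. Cells over distinct points of one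
  fibre are disjoint, since a common point would put both centres in one sheet. They cover
  p\<inverse>(N y): picking, for each x over y, a point of G x over a given w \<in> N y injects the fibre
  over y into the fibre over w, which is no larger, so every point over w is reached. Finally
  each star of the cover lies in a single sheet and is therefore a slice.
\<close>

lemma homeomorphic_map_restrict_openin:
  assumes U: "openin X U" and V: "openin Y V"
    and hom: "homeomorphic_map (subtopology X U) (subtopology Y V) p"
    and AU: "A \<subseteq> U" and A: "openin X A"
  shows "openin Y (p ` A)" and "homeomorphic_map (subtopology X A) (subtopology Y (p ` A)) p"
proof -
  have top: "topspace (subtopology X U) = U" "topspace (subtopology Y V) = V"
    using U V openin_subset by auto
  have "openin (subtopology X U) A"
    using U A AU by (simp add: openin_open_subtopology)
  then have "openin (subtopology Y V) (p ` A)"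
    using hom homeomorphic_map_openness_eq by blast
  then show "openin Y (p ` A)"
    using V by (simp add: openin_open_subtopology)
  have pAV: "p ` A \<subseteq> V"
    using hom top AU by (metis homeomorphic_imp_surjective_map image_mono)
  have "homeomorphic_map (subtopology (subtopology X U) A) (subtopology (subtopology Y V) (p ` A)) p"
    by (rule homeomorphic_map_subtopologies[OF hom]) (use top AU pAV in auto)
  then show "homeomorphic_map (subtopology X A) (subtopology Y (p ` A)) p"
    using AU pAV by (simp add: subtopology_subtopology Int_absorb1)
qed

definition evenly_covered :: "'a topology \<Rightarrow> 'b topology \<Rightarrow> ('a \<Rightarrow> 'b) \<Rightarrow> 'b set \<Rightarrow> 'a set set \<Rightarrow> bool" where
  "evenly_covered X Y p V \<U> \<longleftrightarrow>
     \<Union>\<U> = {x \<in> topspace X. p x \<in> V} \<and> pairwise disjnt \<U> \<and>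
     (\<forall>U \<in> \<U>. openin X U \<and> homeomorphic_map (subtopology X U) (subtopology Y V) p)"

definition sheet :: "'a topology \<Rightarrow> 'b topology \<Rightarrow> ('a \<Rightarrow> 'b) \<Rightarrow> 'a set \<Rightarrow> bool" where
  "sheet X Y p U \<longleftrightarrow> (\<exists>V \<U>. openin Y V \<and> evenly_covered X Y p V \<U> \<and> U \<in> \<U>)"

lemma slice_iff_evenly_covered:
  "slice X Y p U \<longleftrightarrow> openin X U \<and> (\<exists>\<U>. U \<in> \<U> \<and> evenly_covered X Y p (p ` U) \<U>)"
  by (auto simp: slice_def evenly_covered_def)

lemma covering_map_imp_continuous_map: "covering_map X Y p \<Longrightarrow> continuous_map X Y p"
  by (simp add: covering_map_def)

lemma covering_map_evenly_covered:
  assumes "covering_map X Y p" "y \<in> topspace Y"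
  obtains V \<U> where "openin Y V" "y \<in> V" "evenly_covered X Y p V \<U>"
  using assms unfolding covering_map_def evenly_covered_def by meson

lemma covering_map_sheet_exists:
  assumes cov: "covering_map X Y p" and x: "x \<in> topspace X"
  obtains U where "sheet X Y p U" "x \<in> U"
proof -
  have "p x \<in> topspace Y"
    using x covering_map_imp_continuous_map[OF cov] continuous_map_image_subset_topspace by blast
  then obtain V \<U> where V: "openin Y V" "p x \<in> V" "evenly_covered X Y p V \<U>"
    using covering_map_evenly_covered[OF cov] by blast
  then have "x \<in> \<Union>\<U>"
    using x by (simp add: evenly_covered_def)
  then show thesis
    using V that by (auto simp: sheet_def)
qed

lemma evenly_covered_sheet:
  assumes "evenly_covered X Y p V \<U>" "openin Y V" "U \<in> \<U>"
  shows "openin X U" "p ` U = V" "inj_on p U"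
proof -
  show U: "openin X U"
    using assms by (simp add: evenly_covered_def)
  have hom: "homeomorphic_map (subtopology X U) (subtopology Y V) p"
    using assms by (simp add: evenly_covered_def)
  have "topspace (subtopology X U) = U" "topspace (subtopology Y V) = V"
    using U assms(2) openin_subset by auto
  then show "p ` U = V" "inj_on p U"
    using hom by (metis homeomorphic_imp_surjective_map, metis homeomorphic_imp_injective_map)
qed

lemma evenly_covered_restrict:
  assumes ev: "evenly_covered X Y p V \<U>" and V: "openin Y V"
    and cont: "continuous_map X Y p" and B: "openin Y B" "B \<subseteq> V"
  shows "evenly_covered X Y p B ((\<lambda>U. {x \<in> U. p x \<in> B}) ` \<U>)"
  unfolding evenly_covered_def
proof (intro conjI ballI)
  show "\<Union>((\<lambda>U. {x \<in> U. p x \<in> B}) ` \<U>) = {x \<in> topspace X. p x \<in> B}"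
  proof -
    have "\<Union>\<U> = {x \<in> topspace X. p x \<in> V}"
      using ev by (simp add: evenly_covered_def)
    then show ?thesis
      using B(2) by blast
  qed
  have "pairwise disjnt \<U>"
    using ev by (simp add: evenly_covered_def)
  then show "pairwise disjnt ((\<lambda>U. {x \<in> U. p x \<in> B}) ` \<U>)"
    unfolding pairwise_def disjnt_def by blast
next
  fix U' assume "U' \<in> (\<lambda>U. {x \<in> U. p x \<in> B}) ` \<U>"
  then obtain U where U: "U \<in> \<U>" and U': "U' = {x \<in> U. p x \<in> B}"
    by blast
  note sheet = evenly_covered_sheet[OF ev V U]
  have U'_eq: "U' = U \<inter> {x \<in> topspace X. p x \<in> B}"
    using U' openin_subset[OF sheet(1)] by blast
  show U'_open: "openin X U'"
    unfolding U'_eq using sheet(1) B(1) cont by (simp add: openin_Int openin_continuous_map_preimage)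
  have "p ` U' = B"
    using sheet(2) B(2) U' by blast
  moreover have "homeomorphic_map (subtopology X U) (subtopology Y V) p"
    using ev U by (simp add: evenly_covered_def)
  then have "homeomorphic_map (subtopology X U') (subtopology Y (p ` U')) p"
    by (rule homeomorphic_map_restrict_openin(2)[OF sheet(1) V _ _ U'_open]) (use U' in blast)
  ultimately show "homeomorphic_map (subtopology X U') (subtopology Y B) p"
    by simp
qed

lemma sheet_openin: "sheet X Y p U \<Longrightarrow> openin X U"
  by (auto simp: sheet_def dest: evenly_covered_sheet)

lemma sheet_inj_on: "sheet X Y p U \<Longrightarrow> inj_on p U"
  by (auto simp: sheet_def dest: evenly_covered_sheet)

lemma sheet_open_subset:
  assumes "sheet X Y p U" "A \<subseteq> U" "openin X A"
  shows "openin Y (p ` A)" and "homeomorphic_map (subtopology X A) (subtopology Y (p ` A)) p"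
proof -
  obtain V \<U> where V: "openin Y V" and ev: "evenly_covered X Y p V \<U>" and U: "U \<in> \<U>"
    using assms(1) by (auto simp: sheet_def)
  have "homeomorphic_map (subtopology X U) (subtopology Y V) p"
    using ev U by (simp add: evenly_covered_def)
  from homeomorphic_map_restrict_openin[OF evenly_covered_sheet(1)[OF ev V U] V this assms(2,3)]
  show "openin Y (p ` A)" "homeomorphic_map (subtopology X A) (subtopology Y (p ` A)) p"
    by blast+
qed

lemma slice_if_open_subset_sheet:
  assumes cont: "continuous_map X Y p" and "sheet X Y p U" "A \<subseteq> U" "openin X A"
  shows "slice X Y p A"
proof -
  obtain V \<U> where V: "openin Y V" and ev: "evenly_covered X Y p V \<U>" and U: "U \<in> \<U>"
    using assms(2) by (auto simp: sheet_def)
  have "p ` A \<subseteq> V"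
    using evenly_covered_sheet(2)[OF ev V U] assms(3) by blast
  then have "evenly_covered X Y p (p ` A) ((\<lambda>U. {x \<in> U. p x \<in> p ` A}) ` \<U>)"
    using evenly_covered_restrict[OF ev V cont] sheet_open_subset(1)[OF assms(2-4)] by blast
  moreover have "A \<in> (\<lambda>U. {x \<in> U. p x \<in> p ` A}) ` \<U>"
  proof
    show "A = {x \<in> U. p x \<in> p ` A}"
      using inj_on_image_mem_iff[OF evenly_covered_sheet(3)[OF ev V U] _ assms(3)] assms(3)
      by blast
  qed (rule U)
  ultimately show ?thesis
    using assms(4) unfolding slice_iff_evenly_covered by (intro conjI exI)
qed

text \<open>Over an evenly covered set all fibres meet the same sheets, once each.\<close>
lemma evenly_covered_card_fibre_le:
  assumes ev: "evenly_covered X Y p V \<U>" and V: "openin Y V" and "y \<in> V" "w \<in> V"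
    and fin: "finite {x \<in> topspace X. p x = y}"
  shows "card {x \<in> topspace X. p x = w} \<le> card {x \<in> topspace X. p x = y}"
proof -
  let ?Fw = "{x \<in> topspace X. p x = w}"
  have "\<exists>x. p x = y \<and> (\<exists>U\<in>\<U>. z \<in> U \<and> x \<in> U)" if "z \<in> ?Fw" for z
  proof -
    have "z \<in> \<Union>\<U>"
      using ev that \<open>w \<in> V\<close> by (simp add: evenly_covered_def)
    then obtain U where U: "U \<in> \<U>" "z \<in> U"
      by blast
    then show ?thesis
      using evenly_covered_sheet(2)[OF ev V U(1)] \<open>y \<in> V\<close> by blast
  qed
  then obtain lift where lift: "\<forall>z\<in>?Fw. p (lift z) = y \<and> (\<exists>U\<in>\<U>. z \<in> U \<and> lift z \<in> U)"
    using bchoice[of ?Fw "\<lambda>z x. p x = y \<and> (\<exists>U\<in>\<U>. z \<in> U \<and> x \<in> U)"] by blast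
  have "inj_on lift ?Fw"
  proof (rule inj_onI)
    fix z1 z2 assume z: "z1 \<in> ?Fw" "z2 \<in> ?Fw" and eq: "lift z1 = lift z2"
    obtain U1 U2 where U: "U1 \<in> \<U>" "z1 \<in> U1" "lift z1 \<in> U1" "U2 \<in> \<U>" "z2 \<in> U2" "lift z2 \<in> U2"
      using lift z by blast
    have "pairwise disjnt \<U>"
      using ev by (simp add: evenly_covered_def)
    then have "U1 = U2"
      using U eq unfolding pairwise_def disjnt_def by (metis disjoint_iff)
    then show "z1 = z2"
      using evenly_covered_sheet(3)[OF ev V U(1)] U z unfolding inj_on_def by simp
  qed
  moreover have "lift ` ?Fw \<subseteq> {x \<in> topspace X. p x = y}"
    using lift evenly_covered_sheet(1)[OF ev V] openin_subset by fastforce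
  ultimately show ?thesis
    using card_inj_on_le fin by blast
qed

lemma paracompact_space_refinement:
  assumes "paracompact_space X" "\<And>C. C \<in> \<C> \<Longrightarrow> openin X C" "\<Union>\<C> = topspace X"
  obtains \<D> where "\<And>D. D \<in> \<D> \<Longrightarrow> openin X D" "\<Union>\<D> = topspace X"
    "\<And>D. D \<in> \<D> \<Longrightarrow> \<exists>C\<in>\<C>. D \<subseteq> C" "locally_finite_in X \<D>"
proof -
  have "\<forall>C\<in>\<C>. openin X C"
    using assms(2) by blast
  then have "\<exists>\<D>. (\<forall>D\<in>\<D>. openin X D) \<and> \<Union>\<D> = topspace X \<and>
      (\<forall>D\<in>\<D>. \<exists>C\<in>\<C>. D \<subseteq> C) \<and> locally_finite_in X \<D>"
    using assms(1)[unfolded paracompact_space_def, THEN conjunct2, THEN spec[of _ \<C>]] assms(3)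
    by simp
  then obtain \<D> where "\<forall>D\<in>\<D>. openin X D" "\<Union>\<D> = topspace X"
    "\<forall>D\<in>\<D>. \<exists>C\<in>\<C>. D \<subseteq> C" "locally_finite_in X \<D>"
    by (elim exE conjE)
  then show thesis
    by (intro that) auto
qed

lemma Hausdorff_space_open_closure_avoiding:
  assumes "Hausdorff_space X" "c \<in> topspace X" "x \<in> topspace X" "c \<noteq> x"
  obtains P where "openin X P" "c \<in> P" "x \<notin> X closure_of P"
proof -
  obtain P Q where PQ: "openin X P" "openin X Q" "c \<in> P" "x \<in> Q" "disjnt P Q"
    using assms unfolding Hausdorff_space_def by blast
  then have "x \<notin> X closure_of P"
    by (metis disjnt_iff in_closure_of)
  with PQ show thesis
    using that by blast
qed

lemma paracompact_imp_regular_space: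
  assumes para: "paracompact_space X"
  shows "regular_space X"
  unfolding neighbourhood_base_of_closedin[symmetric] neighbourhood_base_of
proof (intro allI impI)
  fix W x assume W: "openin X W \<and> x \<in> W"
  then have x: "x \<in> topspace X"
    using openin_subset by blast
  have H: "Hausdorff_space X"
    using para by (simp add: paracompact_space_def)
  define \<C> where "\<C> = insert W {P. openin X P \<and> x \<notin> X closure_of P}"
  have C_open: "\<And>C. C \<in> \<C> \<Longrightarrow> openin X C"
    using W unfolding \<C>_def by blast
  have "c \<in> \<Union>\<C>" if c: "c \<in> topspace X" "c \<notin> W" for c
    using Hausdorff_space_open_closure_avoiding[OF H c(1) x] c W unfolding \<C>_def by blast
  then have C_cover: "\<Union>\<C> = topspace X"
    using C_open openin_subset W unfolding \<C>_def by blast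
  obtain \<D> where D: "\<And>D. D \<in> \<D> \<Longrightarrow> openin X D" "\<Union>\<D> = topspace X"
    "\<And>D. D \<in> \<D> \<Longrightarrow> \<exists>C\<in>\<C>. D \<subseteq> C" "locally_finite_in X \<D>"
    using paracompact_space_refinement[OF para C_open C_cover] by blast
  define \<E> where "\<E> = {D \<in> \<D>. \<not> D \<subseteq> W}"
  have "x \<notin> X closure_of D" if D_in: "D \<in> \<E>" for D
  proof -
    obtain C where "C \<in> \<C>" "D \<subseteq> C" "C \<noteq> W"
      using D(3) D_in unfolding \<E>_def by blast
    then show ?thesis
      using closure_of_mono unfolding \<C>_def by blast
  qed
  moreover have "X closure_of \<Union>\<E> = \<Union>((\<lambda>D. X closure_of D) ` \<E>)"
    by (rule closure_of_locally_finite_Union[OF locally_finite_in_subset[OF D(4)]])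
      (simp add: \<E>_def)
  ultimately have x_notin: "x \<notin> X closure_of \<Union>\<E>"
    by simp
  have E_open: "openin X (\<Union>\<E>)"
    using D(1) unfolding \<E>_def by blast
  have "topspace X - \<Union>\<E> \<subseteq> W"
    using D(2) unfolding \<E>_def by blast
  moreover have "topspace X - X closure_of \<Union>\<E> \<subseteq> topspace X - \<Union>\<E>"
    using closure_of_subset[OF openin_subset[OF E_open]] by blast
  moreover have "openin X (topspace X - X closure_of \<Union>\<E>)" "closedin X (topspace X - \<Union>\<E>)"
    using E_open by (simp_all add: openin_diff closedin_diff)
  ultimately show "\<exists>U V. openin X U \<and> closedin X V \<and> x \<in> U \<and> U \<subseteq> V \<and> V \<subseteq> W"
    using x x_notin by blast
qed

lemma locally_finite_in_finite_closures_at: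
  assumes "locally_finite_in X \<D>" "x \<in> topspace X"
  shows "finite {D \<in> \<D>. x \<in> X closure_of D}"
proof -
  obtain V where V: "openin X V" "x \<in> V" and fin: "finite {D \<in> \<D>. D \<inter> V \<noteq> {}}"
    using assms unfolding locally_finite_in_def by blast
  have "{D \<in> \<D>. x \<in> X closure_of D} \<subseteq> {D \<in> \<D>. D \<inter> V \<noteq> {}}"
    using V openin_Int_closure_of_eq_empty[OF V(1)] by blast
  then show ?thesis
    using fin finite_subset by blast
qed

lemma locally_finite_point_star_refinement:
  assumes lf: "locally_finite_in X \<D>" and cover: "\<Union>\<D> = topspace X"
    and nbhd: "\<And>D. D \<in> \<D> \<Longrightarrow> openin X (N D) \<and> X closure_of D \<subseteq> N D"
  obtains G where "\<And>x. x \<in> topspace X \<Longrightarrow> openin X (G x) \<and> x \<in> G x"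
    and "\<And>z. z \<in> topspace X \<Longrightarrow> \<exists>D\<in>\<D>. \<forall>x\<in>topspace X. z \<in> G x \<longrightarrow> G x \<subseteq> N D"
proof -
  \<comment> \<open>G x lies in N D whenever x \<in> closure D, and misses the closures of all other D,
    so z \<in> D \<inter> G x forces x \<in> closure D and hence G x \<subseteq> N D.\<close>
  define F where "F x = {D \<in> \<D>. x \<in> X closure_of D}" for x
  define K where "K x = \<Union>((\<lambda>D. X closure_of D) ` (\<D> - F x))" for x
  define G where "G x = topspace X \<inter> \<Inter>(N ` F x) - K x" for x
  have "openin X (G x) \<and> x \<in> G x" if x: "x \<in> topspace X" for x
  proof
    have "openin X (topspace X \<inter> \<Inter>(N ` F x))"
      using locally_finite_in_finite_closures_at[OF lf x] nbhd
      by (intro openin_Int_Inter) (auto simp: F_def)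
    moreover have "closedin X (K x)"
      unfolding K_def by (rule closedin_Union_locally_finite_closure[OF locally_finite_in_subset[OF lf]]) blast
    ultimately show "openin X (G x)"
      unfolding G_def by (rule openin_diff)
    show "x \<in> G x"
      using x nbhd unfolding G_def K_def F_def by blast
  qed
  moreover have "\<exists>D\<in>\<D>. \<forall>x\<in>topspace X. z \<in> G x \<longrightarrow> G x \<subseteq> N D" if z: "z \<in> topspace X" for z
  proof -
    obtain D where D: "D \<in> \<D>" "z \<in> D"
      using cover z by blast
    then have z_cl: "z \<in> X closure_of D"
      using closure_of_subset[of D X] cover by blast
    have "G x \<subseteq> N D" if "z \<in> G x" for x
    proof -
      have "D \<in> F x"
      proof (rule ccontr)
        assume "D \<notin> F x"
        then have "z \<in> K x"
          using D(1) z_cl unfolding K_def by blast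
        then show False
          using \<open>z \<in> G x\<close> unfolding G_def by blast
      qed
      then show ?thesis
        unfolding G_def by blast
    qed
    then show ?thesis
      using D(1) by blast
  qed
  ultimately show thesis
    using that by blast
qed

lemma paracompact_closure_refinement:
  assumes para: "paracompact_space X"
    and cover: "\<And>x. x \<in> topspace X \<Longrightarrow> \<exists>U. P U \<and> openin X U \<and> x \<in> U"
  obtains \<D> N where "locally_finite_in X \<D>" "\<Union>\<D> = topspace X"
    "\<And>D. D \<in> \<D> \<Longrightarrow> P (N D) \<and> openin X (N D) \<and> X closure_of D \<subseteq> N D"
proof -
  define \<C> where "\<C> = {C. openin X C \<and> (\<exists>U. P U \<and> openin X U \<and> X closure_of C \<subseteq> U)}"
  have C_open: "\<And>C. C \<in> \<C> \<Longrightarrow> openin X C"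
    by (simp add: \<C>_def)
  have "x \<in> \<Union>\<C>" if x: "x \<in> topspace X" for x
  proof -
    obtain U where U: "P U" "openin X U" "x \<in> U"
      using cover x by blast
    moreover have "neighbourhood_base_of (closedin X) X"
      using paracompact_imp_regular_space[OF para] by (simp add: neighbourhood_base_of_closedin)
    ultimately have "\<exists>C V. openin X C \<and> closedin X V \<and> x \<in> C \<and> C \<subseteq> V \<and> V \<subseteq> U"
      unfolding neighbourhood_base_of by blast
    then obtain C V where C: "openin X C" "x \<in> C" and "closedin X V" "C \<subseteq> V" "V \<subseteq> U"
      by blast
    then have "X closure_of C \<subseteq> U"
      using closure_of_minimal by blast
    then have "C \<in> \<C>"
      using U C(1) unfolding \<C>_def by blast
    then show ?thesis
      using C(2) by blast
  qed
  then have C_cover: "\<Union>\<C> = topspace X"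
    using C_open openin_subset by blast
  obtain \<D> where D: "\<And>D. D \<in> \<D> \<Longrightarrow> openin X D" "\<Union>\<D> = topspace X"
    "\<And>D. D \<in> \<D> \<Longrightarrow> \<exists>C\<in>\<C>. D \<subseteq> C" "locally_finite_in X \<D>"
    using paracompact_space_refinement[OF para C_open C_cover] by blast
  have "\<exists>U. P U \<and> openin X U \<and> X closure_of D \<subseteq> U" if D_in: "D \<in> \<D>" for D
  proof -
    obtain C U where "D \<subseteq> C" "P U" "openin X U" "X closure_of C \<subseteq> U"
      using D(3)[OF D_in] unfolding \<C>_def by blast
    then show ?thesis
      using closure_of_mono[of D C X] by blast
  qed
  then obtain N where N: "\<And>D. D \<in> \<D> \<Longrightarrow> P (N D) \<and> openin X (N D) \<and> X closure_of D \<subseteq> N D"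
    by metis
  show thesis
    by (rule that[OF D(4) D(2) N])
qed

lemma paracompact_point_star_refinement:
  assumes para: "paracompact_space X"
    and cover: "\<And>x. x \<in> topspace X \<Longrightarrow> \<exists>U. P U \<and> openin X U \<and> x \<in> U"
  obtains G where "\<And>x. x \<in> topspace X \<Longrightarrow> openin X (G x) \<and> x \<in> G x"
    and "\<And>z. z \<in> topspace X \<Longrightarrow> \<exists>U. P U \<and> (\<forall>x\<in>topspace X. z \<in> G x \<longrightarrow> G x \<subseteq> U)"
proof -
  obtain \<D> N where D: "locally_finite_in X \<D>" "\<Union>\<D> = topspace X"
    and N: "\<And>D. D \<in> \<D> \<Longrightarrow> P (N D) \<and> openin X (N D) \<and> X closure_of D \<subseteq> N D"
    using paracompact_closure_refinement[OF para cover] by blast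
  obtain G where G: "\<And>x. x \<in> topspace X \<Longrightarrow> openin X (G x) \<and> x \<in> G x"
    and star: "\<And>z. z \<in> topspace X \<Longrightarrow> \<exists>D\<in>\<D>. \<forall>x\<in>topspace X. z \<in> G x \<longrightarrow> G x \<subseteq> N D"
    using locally_finite_point_star_refinement[OF D, of N] N by blast
  show thesis
  proof (rule that)
    show "openin X (G x) \<and> x \<in> G x" if "x \<in> topspace X" for x
      using G that by blast
    show "\<exists>U. P U \<and> (\<forall>x\<in>topspace X. z \<in> G x \<longrightarrow> G x \<subseteq> U)" if "z \<in> topspace X" for z
      using star[OF that] N by blast
  qed
qed

locale sheet_star_refinement =
  fixes X :: "'a topology" and Y :: "'b topology" and p :: "'a \<Rightarrow> 'b" and G :: "'a \<Rightarrow> 'a set"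
  assumes covering: "covering_map X Y p"
    and finite_fibres: "\<And>y. y \<in> topspace Y \<Longrightarrow> finite {x \<in> topspace X. p x = y}"
    and G_open: "\<And>x. x \<in> topspace X \<Longrightarrow> openin X (G x) \<and> x \<in> G x"
    and G_star: "\<And>z. z \<in> topspace X \<Longrightarrow> \<exists>U. sheet X Y p U \<and> (\<forall>x\<in>topspace X. z \<in> G x \<longrightarrow> G x \<subseteq> U)"
begin

lemma continuous: "continuous_map X Y p"
  using covering by (rule covering_map_imp_continuous_map)

lemma G_subset_topspace: "x \<in> topspace X \<Longrightarrow> G x \<subseteq> topspace X"
  using G_open openin_subset by blast

lemma p_in_topspace: "x \<in> topspace X \<Longrightarrow> p x \<in> topspace Y"
  using continuous_map_image_subset_topspace[OF continuous] by blast

lemma G_subset_sheet: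
  assumes "x \<in> topspace X"
  obtains U where "sheet X Y p U" "G x \<subseteq> U"
proof -
  obtain U where "sheet X Y p U" "\<forall>x'\<in>topspace X. x \<in> G x' \<longrightarrow> G x' \<subseteq> U"
    using G_star[OF assms] by blast
  then show thesis
    using that G_open[OF assms] assms by blast
qed

lemma openin_image_G: "x \<in> topspace X \<Longrightarrow> openin Y (p ` G x)"
  by (metis G_open G_subset_sheet sheet_open_subset(1))

lemma G_fibre_disjoint:
  assumes "x1 \<in> topspace X" "x2 \<in> topspace X" "p x1 = p x2" "z \<in> G x1" "z \<in> G x2"
  shows "x1 = x2"
proof -
  have "z \<in> topspace X"
    using assms(1,4) G_subset_topspace by blast
  then obtain U where U: "sheet X Y p U" "\<forall>x\<in>topspace X. z \<in> G x \<longrightarrow> G x \<subseteq> U"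
    using G_star by blast
  then have "x1 \<in> U" "x2 \<in> U"
    using assms G_open by blast+
  then show ?thesis
    using sheet_inj_on[OF U(1)] assms(3) by (simp add: inj_on_def)
qed

definition fibre :: "'b \<Rightarrow> 'a set" where
  "fibre y = {x \<in> topspace X. p x = y}"

definition base_nbhd :: "'b \<Rightarrow> 'b set" where
  "base_nbhd y = (SOME V. openin Y V \<and> y \<in> V \<and> (\<exists>\<U>. evenly_covered X Y p V \<U>))"

lemma base_nbhd:
  assumes "y \<in> topspace Y"
  shows "openin Y (base_nbhd y)" "y \<in> base_nbhd y" "\<exists>\<U>. evenly_covered X Y p (base_nbhd y) \<U>"
proof -
  have "\<exists>V. openin Y V \<and> y \<in> V \<and> (\<exists>\<U>. evenly_covered X Y p V \<U>)"
    using covering_map_evenly_covered[OF covering assms] by metis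
  then have "openin Y (base_nbhd y) \<and> y \<in> base_nbhd y \<and> (\<exists>\<U>. evenly_covered X Y p (base_nbhd y) \<U>)"
    unfolding base_nbhd_def by (rule someI_ex)
  then show "openin Y (base_nbhd y)" "y \<in> base_nbhd y" "\<exists>\<U>. evenly_covered X Y p (base_nbhd y) \<U>"
    by blast+
qed

definition nbhd :: "'b \<Rightarrow> 'b set" where
  "nbhd y = base_nbhd y \<inter> \<Inter>((\<lambda>x. p ` G x) ` fibre y)"

lemma openin_nbhd: "y \<in> topspace Y \<Longrightarrow> openin Y (nbhd y)"
  unfolding nbhd_def
  using finite_fibres base_nbhd(1) openin_image_G by (intro openin_Int_Inter) (auto simp: fibre_def)

definition cell :: "'a \<Rightarrow> 'a set" where
  "cell x = {z \<in> G x. p z \<in> nbhd (p x)}"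

definition cells :: "'a set set" where
  "cells = cell ` topspace X"

lemma cell_subset_G: "cell x \<subseteq> G x"
  by (auto simp: cell_def)

lemma openin_cell: "x \<in> topspace X \<Longrightarrow> openin X (cell x)"
proof -
  assume x: "x \<in> topspace X"
  then have "cell x = G x \<inter> {z \<in> topspace X. p z \<in> nbhd (p x)}"
    using G_subset_topspace by (auto simp: cell_def)
  then show ?thesis
    using G_open[OF x] openin_continuous_map_preimage[OF continuous openin_nbhd[OF p_in_topspace[OF x]]]
    by (simp add: openin_Int)
qed

lemma centre_in_cell:
  assumes x: "x \<in> topspace X"
  shows "x \<in> cell x"
proof -
  have "p x \<in> p ` G x'" if "x' \<in> fibre (p x)" for x'
    using G_open that unfolding fibre_def by (metis (mono_tags, lifting) image_eqI mem_Collect_eq)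
  then have "p x \<in> nbhd (p x)"
    using base_nbhd(2)[OF p_in_topspace[OF x]] unfolding nbhd_def by blast
  then show ?thesis
    using G_open[OF x] unfolding cell_def by blast
qed

lemma image_cell:
  assumes "x \<in> fibre y"
  shows "p ` cell x = nbhd y"
proof
  show "p ` cell x \<subseteq> nbhd y"
    using assms by (auto simp: cell_def fibre_def)
  show "nbhd y \<subseteq> p ` cell x"
  proof
    fix w assume w: "w \<in> nbhd y"
    then obtain z where "z \<in> G x" "p z = w"
      using assms unfolding nbhd_def by blast
    then show "w \<in> p ` cell x"
      using w assms by (auto simp: cell_def fibre_def)
  qed
qed

lemma cell_sheet_image:
  assumes "x \<in> topspace X"
  shows "slice X Y p (cell x)" "homeomorphic_map (subtopology X (cell x)) (subtopology Y (nbhd (p x))) p"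
proof -
  obtain U where U: "sheet X Y p U" "G x \<subseteq> U"
    using G_subset_sheet[OF assms] .
  have "cell x \<subseteq> U"
    using U(2) cell_subset_G by blast
  then show "slice X Y p (cell x)"
    using slice_if_open_subset_sheet[OF continuous U(1)] openin_cell[OF assms] by blast
  show "homeomorphic_map (subtopology X (cell x)) (subtopology Y (nbhd (p x))) p"
    using sheet_open_subset(2)[OF U(1) \<open>cell x \<subseteq> U\<close> openin_cell[OF assms]] image_cell assms
    by (simp add: fibre_def)
qed

lemma preimage_nbhd_subset_cells:
  assumes y: "y \<in> topspace Y" and z: "z \<in> topspace X" "p z \<in> nbhd y"
  shows "\<exists>x\<in>fibre y. z \<in> cell x"
proof -
  have "p z \<in> p ` G x" if "x \<in> fibre y" for x
    using z(2) that by (simp add: nbhd_def)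
  then have "\<forall>x\<in>fibre y. \<exists>z'. z' \<in> G x \<and> p z' = p z"
    by (metis imageE)
  then obtain lift where lift: "\<And>x. x \<in> fibre y \<Longrightarrow> lift x \<in> G x \<and> p (lift x) = p z"
    using bchoice[of "fibre y" "\<lambda>x z'. z' \<in> G x \<and> p z' = p z"] by blast
  have "inj_on lift (fibre y)"
  proof (rule inj_onI)
    fix x1 x2 assume "x1 \<in> fibre y" "x2 \<in> fibre y" "lift x1 = lift x2"
    then show "x1 = x2"
      using G_fibre_disjoint lift unfolding fibre_def by (metis (mono_tags, lifting) mem_Collect_eq)
  qed
  moreover have lift_into: "lift ` fibre y \<subseteq> fibre (p z)"
    using lift G_subset_topspace unfolding fibre_def by blast
  moreover have "card (fibre (p z)) \<le> card (fibre y)"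
  proof -
    obtain \<U> where "evenly_covered X Y p (base_nbhd y) \<U>"
      using base_nbhd(3)[OF y] by blast
    moreover have "p z \<in> base_nbhd y"
      using z(2) by (simp add: nbhd_def)
    ultimately show ?thesis
      unfolding fibre_def
      by (rule evenly_covered_card_fibre_le[OF _ base_nbhd(1)[OF y] base_nbhd(2)[OF y] _ finite_fibres[OF y]])
  qed
  moreover have "finite (fibre (p z))"
    using finite_fibres[OF p_in_topspace[OF z(1)]] by (simp add: fibre_def)
  ultimately have "lift ` fibre y = fibre (p z)"
    using card_mono card_image card_subset_eq by (metis le_antisym)
  moreover have "z \<in> fibre (p z)"
    using z(1) by (simp add: fibre_def)
  ultimately obtain x where x: "x \<in> fibre y" "z = lift x"
    by blast
  then have "p x = y"
    by (simp add: fibre_def)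
  then show ?thesis
    using x lift z(2) unfolding cell_def by blast
qed

lemma cells_evenly_cover:
  assumes y: "y \<in> topspace Y"
  shows "evenly_covered X Y p (nbhd y) (cell ` fibre y)"
  unfolding evenly_covered_def
proof (intro conjI ballI)
  show "\<Union>(cell ` fibre y) = {z \<in> topspace X. p z \<in> nbhd y}"
  proof
    show "\<Union>(cell ` fibre y) \<subseteq> {z \<in> topspace X. p z \<in> nbhd y}"
      using G_subset_topspace cell_subset_G unfolding cell_def fibre_def by blast
    show "{z \<in> topspace X. p z \<in> nbhd y} \<subseteq> \<Union>(cell ` fibre y)"
      using preimage_nbhd_subset_cells[OF y] by blast
  qed
  show "pairwise disjnt (cell ` fibre y)"
  proof (rule pairwise_imageI)
    fix x1 x2 assume "x1 \<in> fibre y" "x2 \<in> fibre y" "x1 \<noteq> x2"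
    then show "disjnt (cell x1) (cell x2)"
      using G_fibre_disjoint cell_subset_G unfolding fibre_def disjnt_def by blast
  qed
next
  fix C assume "C \<in> cell ` fibre y"
  then obtain x where x: "x \<in> fibre y" "C = cell x"
    by blast
  then have "x \<in> topspace X" "p x = y"
    by (simp_all add: fibre_def)
  then show "openin X C" "homeomorphic_map (subtopology X C) (subtopology Y (nbhd y)) p"
    using openin_cell cell_sheet_image(2) x(2) by blast+
qed

lemma star_cells_slice:
  assumes z: "z \<in> topspace X"
  shows "slice X Y p (star z cells)"
proof -
  obtain U where U: "sheet X Y p U" "\<forall>x\<in>topspace X. z \<in> G x \<longrightarrow> G x \<subseteq> U"
    using G_star[OF z] by blast
  have "star z cells \<subseteq> U"
    using U(2) cell_subset_G unfolding star_def cells_def by blast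
  moreover have "openin X (star z cells)"
    unfolding star_def cells_def using openin_cell by blast
  ultimately show ?thesis
    using slice_if_open_subset_sheet[OF continuous U(1)] by blast
qed

lemma overlay_structure_cells: "overlay_structure X Y p cells"
  unfolding overlay_structure_def covering_structure_def
proof (intro conjI ballI)
  show "\<Union>cells = topspace X"
    using centre_in_cell G_subset_topspace cell_subset_G unfolding cells_def by blast
  show "slice X Y p C" if "C \<in> cells" for C
    using that cell_sheet_image(1) unfolding cells_def by blast
  show "slice X Y p (star z cells)" if "z \<in> topspace X" for z
    using star_cells_slice[OF that] .
  show "\<exists>\<U>\<subseteq>cells. \<Union>\<U> = {x \<in> topspace X. p x \<in> p ` C} \<and> pairwise disjnt \<U> \<and>
      (\<forall>W\<in>\<U>. homeomorphic_map (subtopology X W) (subtopology Y (p ` C)) p)"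
    if C: "C \<in> cells" for C
  proof -
    obtain x where x: "x \<in> topspace X" "C = cell x"
      using C unfolding cells_def by blast
    then have "p ` C = nbhd (p x)"
      using image_cell by (simp add: fibre_def)
    then have "evenly_covered X Y p (p ` C) (cell ` fibre (p x))"
      using cells_evenly_cover[OF p_in_topspace[OF x(1)]] by simp
    moreover have "cell ` fibre (p x) \<subseteq> cells"
      unfolding cells_def fibre_def by blast
    ultimately show ?thesis
      unfolding evenly_covered_def by (intro exI[of _ "cell ` fibre (p x)"]) simp
  qed
qed

lemma overlay: "overlay X Y p"
  unfolding overlay_def using overlay_structure_cells by (rule exI)

end

theorem corollary4p11:
  fixes X :: "'a topology" and Y :: "'b topology" and p :: "'a \<Rightarrow> 'b"
  assumes "covering_map X Y p"
    and "\<forall>y \<in> topspace Y. finite {x \<in> topspace X. p x = y}"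
    and "paracompact_space X"
  shows "overlay X Y p"
proof -
  have sheets: "\<And>x. x \<in> topspace X \<Longrightarrow> \<exists>U. sheet X Y p U \<and> openin X U \<and> x \<in> U"
    using covering_map_sheet_exists[OF assms(1)] sheet_openin by metis
  obtain G where "\<And>x. x \<in> topspace X \<Longrightarrow> openin X (G x) \<and> x \<in> G x"
    and "\<And>z. z \<in> topspace X \<Longrightarrow> \<exists>U. sheet X Y p U \<and> (\<forall>x\<in>topspace X. z \<in> G x \<longrightarrow> G x \<subseteq> U)"
    using paracompact_point_star_refinement[OF assms(3) sheets] by blast
  with assms(1,2) have "sheet_star_refinement X Y p G"
    by (simp add: sheet_star_refinement_def)
  then show ?thesis
    by (rule sheet_star_refinement.overlay)
qed

end
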